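(* In the category of cartesian cubical sets, $\mathrm{I}^{\mathrm{I}}\cong \mathrm{I}+1$.
   Context: Let $\mathbb{B}$ be the category of finite sets $[n]=\{\bot,x_1,\dots,x_n,\top\}$ ($n\ge0$, $\bot\ne\top$) and functions preserving $\bot,\top$; the cartesian cube category is $\mathbb{C}_\times=\mathbb{B}^{op}$, and cartesian cubical sets are presheaves on $\mathbb{C}_\times$. $\mathrm{I}$ is the representable presheaf on $[1]$ (the $1$-cube), $1$ is the terminal presheaf, $\mathrm{I}^{\mathrm{I}}$ is the exponential and $+$ the coproduct. *)

theory Defs
  imports "HOL-Library.FuncSet"
begin

text \<open>The category B: object [n] is represented by the set {0..n+1}, where
  0 plays the role of bot, n+1 the role of top, and 1..n the variables x_1..x_n.\<close>

definition bset :: "nat \<Rightarrow> nat set" where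
  "bset n = {..Suc n}"

definition bhom :: "nat \<Rightarrow> nat \<Rightarrow> (nat \<Rightarrow> nat) set" where
  "bhom n m = {f. f \<in> bset n \<rightarrow>\<^sub>E bset m \<and> f 0 = 0 \<and> f (Suc n) = Suc m}"

definition bid :: "nat \<Rightarrow> (nat \<Rightarrow> nat)" where
  "bid n = restrict id (bset n)"

definition bcomp :: "nat \<Rightarrow> (nat \<Rightarrow> nat) \<Rightarrow> (nat \<Rightarrow> nat) \<Rightarrow> (nat \<Rightarrow> nat)" where
  "bcomp n g f = restrict (g \<circ> f) (bset n)"

text \<open>Cartesian cubical sets = presheaves on B^op = covariant functors B -> Set.
  A B-morphism f : [n] -> [m] acts as  ar X n m f : ob X n -> ob X m.\<close>

record 'a cset =
  ob :: "nat \<Rightarrow> 'a set"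
  ar :: "nat \<Rightarrow> nat \<Rightarrow> (nat \<Rightarrow> nat) \<Rightarrow> 'a \<Rightarrow> 'a"

definition is_cset :: "('a, 'z) cset_scheme \<Rightarrow> bool" where
  "is_cset X \<longleftrightarrow>
     (\<forall>n m f x. f \<in> bhom n m \<longrightarrow> x \<in> ob X n \<longrightarrow> ar X n m f x \<in> ob X m) \<and>
     (\<forall>n x. x \<in> ob X n \<longrightarrow> ar X n n (bid n) x = x) \<and>
     (\<forall>n m k f g x. f \<in> bhom n m \<longrightarrow> g \<in> bhom m k \<longrightarrow> x \<in> ob X n \<longrightarrow>
        ar X n k (bcomp n g f) x = ar X m k g (ar X n m f x))"

text \<open>Representable presheaf on [c]:  y c ([k]) = Hom_C([k],[c]) = Hom_B([c],[k]).\<close>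
definition yB :: "nat \<Rightarrow> (nat \<Rightarrow> nat) cset" where
  "yB c = \<lparr> ob = (\<lambda>k. bhom c k), ar = (\<lambda>k l g f. bcomp c g f) \<rparr>"

definition cI :: "(nat \<Rightarrow> nat) cset" where
  "cI = yB 1"

definition cterm :: "unit cset" where
  "cterm = \<lparr> ob = (\<lambda>_. {()}), ar = (\<lambda>_ _ _ _. ()) \<rparr>"

definition ccoprod :: "'a cset \<Rightarrow> 'b cset \<Rightarrow> ('a + 'b) cset" where
  "ccoprod X Y = \<lparr> ob = (\<lambda>n. Inl ` ob X n \<union> Inr ` ob Y n),
     ar = (\<lambda>n m f. case_sum (\<lambda>x. Inl (ar X n m f x)) (\<lambda>y. Inr (ar Y n m f y))) \<rparr>"

definition cprod :: "'a cset \<Rightarrow> 'b cset \<Rightarrow> ('a \<times> 'b) cset" where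
  "cprod X Y = \<lparr> ob = (\<lambda>n. ob X n \<times> ob Y n),
     ar = (\<lambda>n m f (x, y). (ar X n m f x, ar Y n m f y)) \<rparr>"

definition ntrans :: "'a cset \<Rightarrow> 'b cset \<Rightarrow> (nat \<Rightarrow> 'a \<Rightarrow> 'b) set" where
  "ntrans X Y = {\<theta>. (\<forall>k. \<theta> k \<in> ob X k \<rightarrow>\<^sub>E ob Y k) \<and>
     (\<forall>k l g x. g \<in> bhom k l \<longrightarrow> x \<in> ob X k \<longrightarrow>
        \<theta> l (ar X k l g x) = ar Y k l g (\<theta> k x))}"

text \<open>Exponential: (Q^P)([n]) = Nat(y [n] x P, Q), with the action along
  h : [n] -> [m] in B given by precomposition with y(h).\<close>
definition cexp :: "'a cset \<Rightarrow> 'b cset \<Rightarrow> (nat \<Rightarrow> ((nat \<Rightarrow> nat) \<times> 'a) \<Rightarrow> 'b) cset" where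
  "cexp P Q = \<lparr> ob = (\<lambda>n. ntrans (cprod (yB n) P) Q),
     ar = (\<lambda>n m h \<theta>. (\<lambda>k. restrict (\<lambda>(f, p). \<theta> k (bcomp n f h, p)) (bhom m k \<times> ob P k))) \<rparr>"

definition cset_iso :: "'a cset \<Rightarrow> 'b cset \<Rightarrow> bool" where
  "cset_iso X Y \<longleftrightarrow> (\<exists>\<phi>. (\<forall>n. bij_betw (\<phi> n) (ob X n) (ob Y n)) \<and>
     (\<forall>n m f x. f \<in> bhom n m \<longrightarrow> x \<in> ob X n \<longrightarrow> \<phi> m (ar X n m f x) = ar Y n m f (\<phi> n x)))"

end

theory Submission
  imports Defs
begin

text \<open>Since [n+1] is the coproduct of [n] and [1] in B, the presheaf y[n] \<times> I is representable
  by [n+1], so by Yoneda an element of (I^I)([n]) is determined by a single point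
  t \<in> I([n+1]) = Hom_B([1],[n+1]), namely its value at the generic pair of coproduct injections.
  Either t sends x_1 to the new variable x_(n+1), which gives the second projection
  y[n] \<times> I \<rightarrow> I (the summand 1), or t factors through [n], which gives the map that is constant
  at a point of I([n]) (the summand I).\<close>

lemma bset_iff [simp]: "x \<in> bset n \<longleftrightarrow> x \<le> Suc n"
  by (simp add: bset_def)

lemma bhom_iff:
  "f \<in> bhom n m \<longleftrightarrow> (\<forall>x \<le> Suc n. f x \<le> Suc m) \<and> (\<forall>x. \<not> x \<le> Suc n \<longrightarrow> f x = undefined)
     \<and> f 0 = 0 \<and> f (Suc n) = Suc m"
  unfolding bhom_def PiE_def Pi_def extensional_def by auto

lemma bhom_eqI:
  assumes "f \<in> bhom n m" "g \<in> bhom n m" "\<And>x. x \<le> Suc n \<Longrightarrow> f x = g x"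
  shows "f = g"
  using assms unfolding bhom_iff fun_eq_iff by metis

lemma bhom_1_eqI:
  assumes f: "f \<in> bhom 1 m" and g: "g \<in> bhom 1 m" and "f 1 = g 1"
  shows "f = g"
proof (rule bhom_eqI[OF f g])
  fix x :: nat
  assume "x \<le> Suc 1"
  then consider "x = 0" | "x = 1" | "x = Suc 1"
    by linarith
  then show "f x = g x"
    using assms by cases (auto simp: bhom_iff)
qed

lemma bid_bhom: "bid n \<in> bhom n n"
  by (auto simp: bid_def bhom_iff)

lemma bcomp_bhom: "f \<in> bhom n m \<Longrightarrow> g \<in> bhom m k \<Longrightarrow> bcomp n g f \<in> bhom n k"
  by (auto simp: bhom_iff bcomp_def)

lemma bcomp_assoc: "f \<in> bhom n m \<Longrightarrow> bcomp n (bcomp m h g) f = bcomp n h (bcomp n g f)"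
  by (auto simp: bcomp_def bhom_iff fun_eq_iff)

lemma bcomp_bid_left: "f \<in> bhom n m \<Longrightarrow> bcomp n (bid m) f = f"
  by (auto simp: bcomp_def bid_def bhom_iff fun_eq_iff)

lemma ntrans_eqI:
  assumes "\<theta> \<in> ntrans X Y" "\<eta> \<in> ntrans X Y" "\<And>k x. x \<in> ob X k \<Longrightarrow> \<theta> k x = \<eta> k x"
  shows "\<theta> = \<eta>"
proof
  fix k
  have "\<theta> k \<in> extensional (ob X k)" "\<eta> k \<in> extensional (ob X k)"
    using assms(1,2) by (auto simp: ntrans_def PiE_def)
  then show "\<theta> k = \<eta> k"
    using assms(3) by (rule extensionalityI)
qed

lemma is_cset_yB: "is_cset (yB c)"
  by (auto simp: is_cset_def yB_def bcomp_bhom bcomp_bid_left bcomp_assoc)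

lemma is_cset_cterm: "is_cset cterm"
  by (simp add: is_cset_def cterm_def)

lemma is_cset_ccoprod: "is_cset X \<Longrightarrow> is_cset Y \<Longrightarrow> is_cset (ccoprod X Y)"
  by (auto simp: is_cset_def ccoprod_def)

lemma cset_iso_sym:
  assumes "is_cset X" "cset_iso X Y"
  shows "cset_iso Y X"
proof -
  obtain \<phi> where bij: "\<And>n. bij_betw (\<phi> n) (ob X n) (ob Y n)"
    and nat: "\<And>n m f x. f \<in> bhom n m \<Longrightarrow> x \<in> ob X n \<Longrightarrow> \<phi> m (ar X n m f x) = ar Y n m f (\<phi> n x)"
    using assms(2) unfolding cset_iso_def by blast
  let ?\<psi> = "\<lambda>n. the_inv_into (ob X n) (\<phi> n)"
  have "?\<psi> m (ar Y n m f y) = ar X n m f (?\<psi> n y)"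
    if f: "f \<in> bhom n m" and y: "y \<in> ob Y n" for n m f y
  proof -
    obtain x where x: "x \<in> ob X n" and y_eq: "y = \<phi> n x"
      using y bij by (auto simp: bij_betw_def)
    have inj: "inj_on (\<phi> k) (ob X k)" for k
      using bij by (simp add: bij_betw_def)
    have "ar X n m f x \<in> ob X m"
      using assms(1) f x by (simp add: is_cset_def)
    moreover have "ar Y n m f y = \<phi> m (ar X n m f x)"
      using nat[OF f x] y_eq by simp
    ultimately have "?\<psi> m (ar Y n m f y) = ar X n m f x"
      by (simp add: the_inv_into_f_f[OF inj])
    also have "\<dots> = ar X n m f (?\<psi> n y)"
      using x y_eq by (simp add: the_inv_into_f_f[OF inj])
    finally show ?thesis .
  qed
  moreover have "bij_betw (?\<psi> n) (ob Y n) (ob X n)" for n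
    using bij by (rule bij_betw_the_inv_into)
  ultimately show ?thesis
    unfolding cset_iso_def by (intro exI[where x = ?\<psi>]) blast
qed

section \<open>The coproduct [n] + [1] = [n+1] in B\<close>

definition binl :: "nat \<Rightarrow> nat \<Rightarrow> nat" where
  "binl n = restrict (\<lambda>x. if x \<le> n then x else Suc (Suc n)) (bset n)"

definition binr :: "nat \<Rightarrow> nat \<Rightarrow> nat" where
  "binr n = restrict (\<lambda>x. if x = 0 then 0 else if x = 1 then Suc n else Suc (Suc n)) (bset 1)"

definition bcopair :: "nat \<Rightarrow> (nat \<Rightarrow> nat) \<Rightarrow> (nat \<Rightarrow> nat) \<Rightarrow> nat \<Rightarrow> nat" where
  "bcopair n f p =
     restrict (\<lambda>x. if x \<le> n then f x else if x = Suc n then p 1 else f (Suc n)) (bset (Suc n))"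

lemma binl_bhom: "binl n \<in> bhom n (Suc n)"
  by (auto simp: binl_def bhom_iff)

lemma binr_bhom: "binr n \<in> bhom 1 (Suc n)"
  by (auto simp: binr_def bhom_iff)

lemma bcopair_bhom: "f \<in> bhom n k \<Longrightarrow> p \<in> bhom 1 k \<Longrightarrow> bcopair n f p \<in> bhom (Suc n) k"
  by (auto simp: bcopair_def bhom_iff)

lemma bcopair_binl: "f \<in> bhom n k \<Longrightarrow> p \<in> bhom 1 k \<Longrightarrow> bcomp n (bcopair n f p) (binl n) = f"
  by (auto simp: bcopair_def binl_def bcomp_def bhom_iff fun_eq_iff le_Suc_eq)

lemma bcopair_binr: "f \<in> bhom n k \<Longrightarrow> p \<in> bhom 1 k \<Longrightarrow> bcomp 1 (bcopair n f p) (binr n) = p"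
  by (rule bhom_1_eqI[OF bcomp_bhom[OF binr_bhom bcopair_bhom]])
    (auto simp: bcopair_def binr_def bcomp_def)

lemma bhom_1_Suc_cases:
  assumes t: "t \<in> bhom 1 (Suc n)"
  obtains (binr) "t = binr n" | (binl) g where "g \<in> bhom 1 n" "t = bcomp 1 (binl n) g"
proof (cases "t 1 = Suc n")
  case True
  then have "t = binr n"
    by (intro bhom_1_eqI[OF t binr_bhom]) (simp add: binr_def)
  then show ?thesis ..
next
  case False
  define g where "g = restrict (\<lambda>x. if t x = Suc (Suc n) then Suc n else t x) (bset 1)"
  have t1: "t 1 \<le> n \<or> t 1 = Suc (Suc n)"
    using t False by (auto simp: bhom_iff le_Suc_eq)
  have g: "g \<in> bhom 1 n"
    using t t1 by (auto simp: g_def bhom_iff)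
  have "t = bcomp 1 (binl n) g"
    using t1 by (intro bhom_1_eqI[OF t bcomp_bhom[OF g binl_bhom]])
      (auto simp: g_def binl_def bcomp_def)
  with g show ?thesis ..
qed

section \<open>Natural transformations out of y[n] \<times> I\<close>

lemma ob_cI: "ob cI k = bhom 1 k"
  by (simp add: cI_def yB_def)

lemma ar_cI: "ar cI k l g p = bcomp 1 g p"
  by (simp add: cI_def yB_def)

lemma ob_cprod_yB_cI: "ob (cprod (yB n) cI) k = bhom n k \<times> bhom 1 k"
  by (simp add: cprod_def yB_def ob_cI)

lemma ar_cprod_yB_cI: "ar (cprod (yB n) cI) k l g (f, p) = (bcomp n g f, bcomp 1 g p)"
  by (simp add: cprod_def yB_def ar_cI)

lemma ntrans_yB_cI_iff:
  "\<theta> \<in> ntrans (cprod (yB n) cI) Q \<longleftrightarrow>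
     (\<forall>k. \<theta> k \<in> bhom n k \<times> bhom 1 k \<rightarrow>\<^sub>E ob Q k) \<and>
     (\<forall>k l g f p. g \<in> bhom k l \<longrightarrow> f \<in> bhom n k \<longrightarrow> p \<in> bhom 1 k \<longrightarrow>
        \<theta> l (bcomp n g f, bcomp 1 g p) = ar Q k l g (\<theta> k (f, p)))"
  unfolding ntrans_def ob_cprod_yB_cI by (auto simp: ar_cprod_yB_cI)

lemma ntrans_yB_cI_eqI:
  assumes "\<theta> \<in> ntrans (cprod (yB n) cI) Q" "\<eta> \<in> ntrans (cprod (yB n) cI) Q"
    and "\<And>k f p. f \<in> bhom n k \<Longrightarrow> p \<in> bhom 1 k \<Longrightarrow> \<theta> k (f, p) = \<eta> k (f, p)"
  shows "\<theta> = \<eta>"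
  using assms(1,2) by (rule ntrans_eqI) (auto simp: ob_cprod_yB_cI assms(3))

lemma ntrans_yB_cI_generic:
  assumes \<theta>: "\<theta> \<in> ntrans (cprod (yB n) cI) Q" and f: "f \<in> bhom n k" and p: "p \<in> bhom 1 k"
  shows "\<theta> k (f, p) = ar Q (Suc n) k (bcopair n f p) (\<theta> (Suc n) (binl n, binr n))"
proof -
  have "\<theta> k (bcomp n (bcopair n f p) (binl n), bcomp 1 (bcopair n f p) (binr n))
      = ar Q (Suc n) k (bcopair n f p) (\<theta> (Suc n) (binl n, binr n))"
    using \<theta> bcopair_bhom[OF f p] binl_bhom binr_bhom by (simp add: ntrans_yB_cI_iff)
  then show ?thesis
    unfolding bcopair_binl[OF f p] bcopair_binr[OF f p] .
qed

lemma ntrans_yB_cI_generic_bhom: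
  "\<theta> \<in> ntrans (cprod (yB n) cI) cI \<Longrightarrow> \<theta> (Suc n) (binl n, binr n) \<in> bhom 1 (Suc n)"
  using binl_bhom binr_bhom by (auto simp: ntrans_yB_cI_iff ob_cI)

section \<open>The natural bijection I + 1 \<rightarrow> I^I\<close>

definition const_map :: "nat \<Rightarrow> (nat \<Rightarrow> nat) \<Rightarrow> nat \<Rightarrow> (nat \<Rightarrow> nat) \<times> (nat \<Rightarrow> nat) \<Rightarrow> nat \<Rightarrow> nat"
  where "const_map n g = (\<lambda>k. restrict (\<lambda>(f, p). bcomp 1 f g) (bhom n k \<times> bhom 1 k))"

definition proj_map :: "nat \<Rightarrow> nat \<Rightarrow> (nat \<Rightarrow> nat) \<times> (nat \<Rightarrow> nat) \<Rightarrow> nat \<Rightarrow> nat"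
  where "proj_map n = (\<lambda>k. restrict snd (bhom n k \<times> bhom 1 k))"

definition sum_to_exp :: "nat \<Rightarrow> (nat \<Rightarrow> nat) + unit \<Rightarrow> nat \<Rightarrow> (nat \<Rightarrow> nat) \<times> (nat \<Rightarrow> nat) \<Rightarrow> nat \<Rightarrow> nat"
  where "sum_to_exp n = case_sum (const_map n) (\<lambda>_. proj_map n)"

lemma ob_cexp_cI: "ob (cexp cI cI) n = ntrans (cprod (yB n) cI) cI"
  by (simp add: cexp_def)

lemma ar_cexp_cI:
  "ar (cexp cI cI) n m h \<theta> = (\<lambda>k. restrict (\<lambda>(f, p). \<theta> k (bcomp n f h, p)) (bhom m k \<times> bhom 1 k))"
  by (simp add: cexp_def ob_cI)

lemma ob_cI_plus_1: "ob (ccoprod cI cterm) n = Inl ` bhom 1 n \<union> {Inr ()}"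
  by (simp add: ccoprod_def cterm_def ob_cI)

lemma ar_cI_plus_1:
  "ar (ccoprod cI cterm) n m f y = (case y of Inl g \<Rightarrow> Inl (bcomp 1 f g) | Inr _ \<Rightarrow> Inr ())"
  by (simp add: ccoprod_def cterm_def ar_cI split: sum.split)

lemma const_map_ntrans: "g \<in> bhom 1 n \<Longrightarrow> const_map n g \<in> ntrans (cprod (yB n) cI) cI"
  by (auto simp: ntrans_yB_cI_iff const_map_def ob_cI ar_cI bcomp_bhom bcomp_assoc)

lemma proj_map_ntrans: "proj_map n \<in> ntrans (cprod (yB n) cI) cI"
  by (auto simp: ntrans_yB_cI_iff proj_map_def ob_cI ar_cI bcomp_bhom)

lemma sum_to_exp_ob: "y \<in> ob (ccoprod cI cterm) n \<Longrightarrow> sum_to_exp n y \<in> ob (cexp cI cI) n"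
  by (auto simp: ob_cI_plus_1 sum_to_exp_def ob_cexp_cI const_map_ntrans proj_map_ntrans)

lemma sum_to_exp_natural:
  assumes "h \<in> bhom n m" "y \<in> ob (ccoprod cI cterm) n"
  shows "sum_to_exp m (ar (ccoprod cI cterm) n m h y) = ar (cexp cI cI) n m h (sum_to_exp n y)"
  using assms
  by (auto simp: ob_cI_plus_1 ar_cI_plus_1 sum_to_exp_def ar_cexp_cI const_map_def proj_map_def
      fun_eq_iff bcomp_bhom bcomp_assoc)

lemma const_map_inj:
  assumes g: "g \<in> bhom 1 n" and g': "g' \<in> bhom 1 n" and eq: "const_map n g = const_map n g'"
  shows "g = g'"
proof -
  have "const_map n g n (bid n, g) = const_map n g' n (bid n, g)"
    using eq by simp
  then show ?thesis
    using g g' bid_bhom by (simp add: const_map_def bcomp_bid_left)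
qed

lemma const_map_ne_proj_map:
  assumes "g \<in> bhom 1 n"
  shows "const_map n g \<noteq> proj_map n"
proof
  assume "const_map n g = proj_map n"
  then have "const_map n g (Suc n) (binl n, binr n) 1 = proj_map n (Suc n) (binl n, binr n) 1"
    by simp
  moreover have "g 1 \<le> Suc n"
    using assms by (simp add: bhom_iff)
  ultimately show False
    using binl_bhom binr_bhom
    by (auto simp: const_map_def proj_map_def bcomp_def binl_def binr_def split: if_splits)
qed

lemma sum_to_exp_inj: "inj_on (sum_to_exp n) (ob (ccoprod cI cterm) n)"
  using const_map_inj const_map_ne_proj_map
  by (fastforce simp: inj_on_def ob_cI_plus_1 sum_to_exp_def)

lemma sum_to_exp_surj:
  assumes \<theta>: "\<theta> \<in> ntrans (cprod (yB n) cI) cI"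
  shows "\<theta> \<in> sum_to_exp n ` ob (ccoprod cI cterm) n"
  using ntrans_yB_cI_generic_bhom[OF \<theta>]
proof (cases rule: bhom_1_Suc_cases)
  case binr
  have "\<theta> = proj_map n"
  proof (rule ntrans_yB_cI_eqI[OF \<theta> proj_map_ntrans])
    fix k f p
    assume f: "f \<in> bhom n k" and p: "p \<in> bhom 1 k"
    have "\<theta> k (f, p) = bcomp 1 (bcopair n f p) (binr n)"
      using ntrans_yB_cI_generic[OF \<theta> f p] binr by (simp add: ar_cI)
    also have "\<dots> = p"
      using f p by (rule bcopair_binr)
    finally show "\<theta> k (f, p) = proj_map n k (f, p)"
      using f p by (simp add: proj_map_def)
  qed
  then show ?thesis
    by (intro image_eqI[where x = "Inr ()"]) (auto simp: ob_cI_plus_1 sum_to_exp_def)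
next
  case (binl g)
  have "\<theta> = const_map n g"
  proof (rule ntrans_yB_cI_eqI[OF \<theta> const_map_ntrans[OF binl(1)]])
    fix k f p
    assume f: "f \<in> bhom n k" and p: "p \<in> bhom 1 k"
    have "\<theta> k (f, p) = bcomp 1 (bcopair n f p) (bcomp 1 (binl n) g)"
      using ntrans_yB_cI_generic[OF \<theta> f p] binl(2) by (simp add: ar_cI)
    also have "\<dots> = bcomp 1 (bcomp n (bcopair n f p) (binl n)) g"
      using binl(1) by (rule bcomp_assoc[symmetric])
    also have "\<dots> = bcomp 1 f g"
      using f p by (simp add: bcopair_binl)
    finally show "\<theta> k (f, p) = const_map n g k (f, p)"
      using f p by (simp add: const_map_def)
  qed
  then show ?thesis
    using binl(1) by (intro image_eqI[where x = "Inl g"]) (auto simp: ob_cI_plus_1 sum_to_exp_def)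
qed

lemma sum_to_exp_bij: "bij_betw (sum_to_exp n) (ob (ccoprod cI cterm) n) (ob (cexp cI cI) n)"
  unfolding bij_betw_def using sum_to_exp_inj sum_to_exp_ob sum_to_exp_surj
  by (auto simp: ob_cexp_cI)

theorem lemma2p5:
  shows "cset_iso (cexp cI cI) (ccoprod cI cterm)"
proof (rule cset_iso_sym)
  show "is_cset (ccoprod cI cterm)"
    unfolding cI_def by (intro is_cset_ccoprod is_cset_yB is_cset_cterm)
  show "cset_iso (ccoprod cI cterm) (cexp cI cI)"
    unfolding cset_iso_def using sum_to_exp_bij sum_to_exp_natural by blast
qed

end
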